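(* Fix a prompt $x$ and two responses $y_w$ (preferred) and $y_l$ (dispreferred), a constant $\beta>0$, and reference probabilities $a_0=\pi_{ref}(y_w\mid x)\in(0,1)$, $b_0=\pi_{ref}(y_l\mid x)\in(0,1)$. Regard $a=\pi_\theta(y_w\mid x)\in(0,1)$ and $b=\pi_\theta(y_l\mid x)\in(0,1)$ as independent variables and define $$\lambda_w(a,b)=\frac{\log b}{\log a+\log b},\qquad \mathcal{L}_{bdpo}(a,b)=-\log\sigma\!\Big(\beta\lambda_w(a,b)\log\frac{a}{a_0}-\beta\big(1-\lambda_w(a,b)\big)\log\frac{b}{b_0}\Big),$$ where $\sigma(t)=1/(1+e^{-t})$. Then at the point where $\pi_\theta\equiv\pi_{ref}$, i.e. at $(a,b)=(a_0,b_0)$, $$\frac{\partial \mathcal{L}_{bdpo}}{\partial \pi_\theta(y_w\mid x)}\Big/\frac{\partial \mathcal{L}_{bdpo}}{\partial \pi_\theta(y_l\mid x)}=-\frac{\pi_\theta(y_l\mid x)\log\pi_\theta(y_l\mid x)}{\pi_\theta(y_w\mid x)\log\pi_\theta(y_w\mid x)}.$$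
   Context: $\mathcal{L}_{bdpo}$ is the "Balanced DPO" loss for a single preference pair $(y_w\succ y_l)$ with prompt $x$; the partial derivatives are with respect to the two probabilities $a=\pi_\theta(y_w\mid x)$ and $b=\pi_\theta(y_l\mid x)$, with $\lambda_w$ also depending on them. *)

theory Defs
  imports "HOL-Analysis.Analysis"
begin

definition sigmoid :: "real \<Rightarrow> real" where
  "sigmoid t = 1 / (1 + exp (- t))"

definition lambda_w :: "real \<Rightarrow> real \<Rightarrow> real" where
  "lambda_w a b = ln b / (ln a + ln b)"

definition L_bdpo :: "real \<Rightarrow> real \<Rightarrow> real \<Rightarrow> real \<Rightarrow> real \<Rightarrow> real" where
  "L_bdpo \<beta> a0 b0 a b =
     - ln (sigmoid (\<beta> * lambda_w a b * ln (a / a0) - \<beta> * (1 - lambda_w a b) * ln (b / b0)))"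

end

theory Submission
  imports Defs
begin

text \<open>At the reference point both log-ratios vanish, so the sigmoid is evaluated at 0, where
  the derivative of -ln sigmoid is -1/2, and the dependence of the weight \<open>lambda_w\<close> on
  the variables drops out: only the derivative of the log-ratio it multiplies survives.
  Hence the partial derivatives are \<open>-\<beta> \<lambda>/(2 a0)\<close> and \<open>\<beta> (1 - \<lambda>)/(2 b0)\<close>, and the
  weights \<open>\<lambda> = ln b0/(ln a0 + ln b0)\<close>, \<open>1 - \<lambda> = ln a0/(ln a0 + ln b0)\<close> give the ratio.\<close>

lemma one_minus_lambda_w:
  assumes "ln a + ln b \<noteq> 0"
  shows "1 - lambda_w a b = ln a / (ln a + ln b)"
  using assms by (simp add: lambda_w_def field_simps)

lemma L_bdpo_has_derivative_chosen_at_ref: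
  assumes "0 < a0" "0 < b0" "ln a0 + ln b0 \<noteq> 0"
  shows "((\<lambda>a. L_bdpo \<beta> a0 b0 a b0) has_real_derivative
           - \<beta> * lambda_w a0 b0 / (2 * a0)) (at a0)"
  unfolding L_bdpo_def lambda_w_def sigmoid_def
  by (rule derivative_eq_intros refl | use assms in \<open>force simp: add_pos_pos\<close>)+

lemma L_bdpo_has_derivative_rejected_at_ref:
  assumes "0 < a0" "0 < b0" "ln a0 + ln b0 \<noteq> 0"
  shows "((\<lambda>b. L_bdpo \<beta> a0 b0 a0 b) has_real_derivative
           \<beta> * (1 - lambda_w a0 b0) / (2 * b0)) (at b0)"
  unfolding L_bdpo_def lambda_w_def sigmoid_def
  by (rule derivative_eq_intros refl | use assms in \<open>force simp: add_pos_pos\<close>)+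

theorem proposition5p1:
  fixes \<beta> a0 b0 :: real
  assumes "\<beta> > 0" and "0 < a0" "a0 < 1" and "0 < b0" "b0 < 1"
  shows "deriv (\<lambda>a. L_bdpo \<beta> a0 b0 a b0) a0 / deriv (\<lambda>b. L_bdpo \<beta> a0 b0 a0 b) b0
         = - (b0 * ln b0) / (a0 * ln a0)"
proof -
  note a0_pos = \<open>0 < a0\<close> and b0_pos = \<open>0 < b0\<close>
  have "ln a0 < 0" "ln b0 < 0"
    using assms by simp_all
  then have sum_nonzero: "ln a0 + ln b0 \<noteq> 0"
    by simp
  have "deriv (\<lambda>a. L_bdpo \<beta> a0 b0 a b0) a0 / deriv (\<lambda>b. L_bdpo \<beta> a0 b0 a0 b) b0
        = (- \<beta> * lambda_w a0 b0 / (2 * a0)) / (\<beta> * (1 - lambda_w a0 b0) / (2 * b0))"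
    unfolding
      DERIV_imp_deriv[OF L_bdpo_has_derivative_chosen_at_ref[OF a0_pos b0_pos sum_nonzero]]
      DERIV_imp_deriv[OF L_bdpo_has_derivative_rejected_at_ref[OF a0_pos b0_pos sum_nonzero]]
    ..
  also have "\<dots> = - (b0 * lambda_w a0 b0) / (a0 * (1 - lambda_w a0 b0))"
    using \<open>\<beta> > 0\<close> by (simp add: mult.commute)
  also have "\<dots> = - (b0 * ln b0) / (a0 * ln a0)"
    unfolding one_minus_lambda_w[OF sum_nonzero] unfolding lambda_w_def
    using sum_nonzero by simp
  finally show ?thesis .
qed

end
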